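(* Let $k\in\mathbb{Z}$, let $n\ge 0$ be an integer, and let $m$ be an odd positive integer. Then $$G_{n}^{(k)}(x)=\sum_{l=0}^{n}\binom{n}{l}m^{l-1}\sum_{j=1}^{n-l+1}\sum_{s=0}^{m-1}(-1)^{s}G_{l}\Big(\frac{s+x}{m}\Big)\frac{1}{j^{k-1}}\frac{S_{1}(n-l+1,j)}{n-l+1}.$$
   Context: The Genocchi polynomials $G_n(x)$ are defined by $\frac{2t}{e^t+1}e^{xt}=\sum_{n=0}^{\infty}G_n(x)\frac{t^n}{n!}$. For $k\in\mathbb{Z}$, $\mathrm{Ei}_k(x)=\sum_{n=1}^{\infty}\frac{x^n}{n^k(n-1)!}$, and the poly-Genocchi polynomials $G_n^{(k)}(x)$ are defined by $\frac{2\,\mathrm{Ei}_k(\log(1+t))}{e^t+1}e^{xt}=\sum_{n=0}^{\infty}G_n^{(k)}(x)\frac{t^n}{n!}$. $S_1(n,m)$ are the signed Stirling numbers of the first kind: $\frac{(\log(1+t))^m}{m!}=\sum_{n=m}^{\infty}S_1(n,m)\frac{t^n}{n!}$. *)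

theory Defs
  imports "HOL-Computational_Algebra.Formal_Power_Series"
begin

definition genocchi_poly :: "nat \<Rightarrow> real \<Rightarrow> real" where
  "genocchi_poly n x =
     fact n * fps_nth ((fps_const 2 * fps_X * fps_exp x) / (fps_exp 1 + 1)) n"

definition Ei_fps :: "int \<Rightarrow> real fps" where
  "Ei_fps k = Abs_fps (\<lambda>n. if n = 0 then 0 else 1 / (real n powi k * fact (n - 1)))"

text \<open>Poly-Genocchi polynomials: 2 Ei_k(log(1+t))/(e^t+1) e^(xt) = sum G_n^(k)(x) t^n/n!;
  fps_ln 1 is the series of log(1+t)\<close>
definition poly_genocchi :: "int \<Rightarrow> nat \<Rightarrow> real \<Rightarrow> real" where
  "poly_genocchi k n x =
     fact n * fps_nth ((fps_const 2 * (Ei_fps k oo fps_ln 1) * fps_exp x) / (fps_exp 1 + 1)) n"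

definition stirling1 :: "nat \<Rightarrow> nat \<Rightarrow> real" where
  "stirling1 n m = fact n * fps_nth (fps_ln 1 ^ m / fps_const (fact m)) n"

end

theory Submission
  imports Defs
begin

(* The generating function of G_n^(k)(x) is the Genocchi generating function 2t e^(xt)/(e^t + 1)
   times Ei_k(log(1+t))/t, whose coefficients are the Stirling sums S_1(N,j)/j^(k-1).
   For odd m the geometric sum (e^t + 1) * sum_{s<m} (-e^t)^s = e^(mt) + 1 yields the
   multiplication formula G_l(x) = m^(l-1) sum_{s<m} (-1)^s G_l((s+x)/m); substituting it into
   the binomial convolution gives the theorem. *)

definition genocchi_fps :: "real \<Rightarrow> real fps" where
  "genocchi_fps x = fps_const 2 * fps_X * fps_exp x / (fps_exp 1 + 1)"

lemma genocchi_poly_conv_genocchi_fps: "genocchi_poly n x = fact n * fps_nth (genocchi_fps x) n"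
  by (simp add: genocchi_poly_def genocchi_fps_def)

lemma genocchi_fps_compose_linear:
  "genocchi_fps y oo (fps_const c * fps_X) =
     fps_const (2 * c) * fps_X * fps_exp (c * y) / (fps_exp c + 1)"
  unfolding genocchi_fps_def
  by (simp add: fps_divide_compose fps_compose_mult_distrib fps_compose_add_distrib
      mult.assoc flip: fps_const_mult)

lemma fps_exp_alternating_sum:
  assumes "odd m"
  shows "(fps_exp 1 + 1) * (\<Sum>s<m. fps_const ((-1) ^ s) * fps_exp (real s)) =
    fps_exp (real m) + (1 :: real fps)"
proof -
  have "(-1 :: real fps) ^ s = fps_const ((-1) ^ s)" for s
    by (metis fps_const_1_eq_1 fps_const_neg fps_const_power)
  then have "(\<Sum>s<m. fps_const ((-1) ^ s) * fps_exp (real s)) =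
      (\<Sum>s<m. (- fps_exp 1) ^ s :: real fps)"
    by (simp add: power_minus[of "fps_exp 1"] fps_exp_power_mult)
  moreover have "(1 - (- fps_exp 1 :: real fps)) * (\<Sum>s<m. (- fps_exp 1) ^ s) =
      1 - (- fps_exp 1) ^ m"
    by (rule one_diff_power_eq[symmetric])
  ultimately show ?thesis
    using assms by (simp add: fps_exp_power_mult add.commute)
qed

lemma genocchi_fps_multiplication:
  assumes "odd m"
  shows "(\<Sum>s<m. fps_const ((-1) ^ s) *
      (genocchi_fps ((real s + x) / real m) oo (fps_const (real m) * fps_X))) =
    fps_const (real m) * genocchi_fps x"
proof -
  let ?S = "\<Sum>s<m. fps_const ((-1) ^ s) * fps_exp (real s) :: real fps"
  let ?D = "fps_exp 1 + 1 :: real fps" and ?Dm = "fps_exp (real m) + 1 :: real fps"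
  have "m \<noteq> 0" using odd_pos[OF assms] by simp
  have "?S * inverse ?Dm = inverse ?D * (?D * ?S) * inverse ?Dm"
    by (simp add: inverse_mult_eq_1 mult.assoc)
  also have "\<dots> = inverse ?D"
    by (simp add: fps_exp_alternating_sum[OF assms] inverse_mult_eq_1' mult.assoc)
  finally have quotient: "?S * inverse ?Dm = inverse ?D" .
  have "(\<Sum>s<m. fps_const ((-1) ^ s) *
      (genocchi_fps ((real s + x) / real m) oo (fps_const (real m) * fps_X))) =
    fps_const (2 * real m) * fps_X * fps_exp x * (?S * inverse ?Dm)"
    using \<open>m \<noteq> 0\<close> unfolding genocchi_fps_compose_linear sum_distrib_left sum_distrib_right
    by (intro sum.cong refl) (simp add: fps_divide_unit fps_exp_add_mult mult_ac)
  also have "\<dots> = fps_const (real m) * genocchi_fps x"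
    unfolding quotient genocchi_fps_def by (simp add: fps_divide_unit mult_ac flip: fps_const_mult)
  finally show ?thesis .
qed

lemma genocchi_poly_multiplication:
  assumes "odd m"
  shows "genocchi_poly l x =
    real m powi (int l - 1) * (\<Sum>s<m. (-1) ^ s * genocchi_poly l ((real s + x) / real m))"
proof -
  have "m \<noteq> 0" using odd_pos[OF assms] by simp
  have "real m * fps_nth (genocchi_fps x) l =
      (\<Sum>s<m. (-1) ^ s * (real m ^ l * fps_nth (genocchi_fps ((real s + x) / real m)) l))"
    using arg_cong[OF genocchi_fps_multiplication[OF assms, of x], of "\<lambda>f. fps_nth f l"]
    by (simp add: fps_sum_nth)
  also have "\<dots> = real m * (real m powi (int l - 1) *
      (\<Sum>s<m. (-1) ^ s * fps_nth (genocchi_fps ((real s + x) / real m)) l))"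
    using \<open>m \<noteq> 0\<close> by (simp add: power_int_diff sum_distrib_left mult_ac)
  finally have "fps_nth (genocchi_fps x) l = real m powi (int l - 1) *
      (\<Sum>s<m. (-1) ^ s * fps_nth (genocchi_fps ((real s + x) / real m)) l)"
    using \<open>m \<noteq> 0\<close> by simp
  then show ?thesis
    unfolding genocchi_poly_conv_genocchi_fps by (simp add: sum_distrib_left mult_ac)
qed

lemma Ei_fps_compose_ln_nth:
  "fps_nth (Ei_fps k oo fps_ln 1) N = (\<Sum>j=1..N. stirling1 N j / real j powi (k - 1)) / fact N"
proof -
  have "fps_nth (Ei_fps k oo fps_ln 1) N =
      (\<Sum>j=1..N. fps_nth (Ei_fps k) j * fps_nth (fps_ln 1 ^ j) N)"
    by (simp add: fps_compose_nth Ei_fps_def sum.atLeast_Suc_atMost)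
  also have "\<dots> = (\<Sum>j=1..N. stirling1 N j / real j powi (k - 1) / fact N)"
  proof (intro sum.cong refl)
    fix j :: nat
    assume "j \<in> {1..N}"
    then have "real j powi k = real j powi (k - 1) * real j" and "fact j = real j * fact (j - 1)"
      by (auto simp: power_int_diff fact_reduce)
    then show "fps_nth (Ei_fps k) j * fps_nth (fps_ln 1 ^ j) N =
        stirling1 N j / real j powi (k - 1) / fact N"
      using \<open>j \<in> {1..N}\<close> by (simp add: Ei_fps_def stirling1_def field_simps)
  qed
  also have "\<dots> = (\<Sum>j=1..N. stirling1 N j / real j powi (k - 1)) / fact N"
    by (simp add: sum_divide_distrib)
  finally show ?thesis .
qed

lemma poly_genocchi_conv_genocchi_poly:
  "poly_genocchi k n x = (\<Sum>l=0..n. real (n choose l) * genocchi_poly l x *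
      ((\<Sum>j=1..n-l+1. stirling1 (n-l+1) j / real j powi (k - 1)) / real (n-l+1)))"
proof -
  let ?E = "Ei_fps k oo fps_ln 1"
  have E_shift: "?E = fps_X * fps_shift 1 ?E"
    by (rule fps_ext) (simp add: Ei_fps_def)
  have "poly_genocchi k n x = fact n * fps_nth (genocchi_fps x * fps_shift 1 ?E) n"
    unfolding poly_genocchi_def genocchi_fps_def
    by (subst E_shift) (simp add: fps_divide_unit mult_ac)
  also have "\<dots> = (\<Sum>l=0..n. real (n choose l) * genocchi_poly l x *
      (fact (n - l) * fps_nth ?E (n - l + 1)))"
    unfolding fps_mult_nth sum_distrib_left
    by (intro sum.cong refl) (auto simp: genocchi_poly_conv_genocchi_fps binomial_fact field_simps)
  also have "\<dots> = (\<Sum>l=0..n. real (n choose l) * genocchi_poly l x *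
      ((\<Sum>j=1..n-l+1. stirling1 (n-l+1) j / real j powi (k - 1)) / real (n-l+1)))"
    by (simp add: Ei_fps_compose_ln_nth)
  finally show ?thesis .
qed

theorem theorem6:
  fixes k :: int and n m :: nat and x :: real
  assumes "odd m" and "m > 0"
  shows "poly_genocchi k n x =
    (\<Sum>l=0..n. real (n choose l) * real m powi (int l - 1) *
      (\<Sum>j=1..n-l+1. \<Sum>s=0..m-1.
         (-1) ^ s * genocchi_poly l ((real s + x) / real m) *
         (1 / real j powi (k - 1)) * (stirling1 (n-l+1) j / real (n-l+1))))"
  unfolding poly_genocchi_conv_genocchi_poly
proof (intro sum.cong refl)
  fix l
  let ?N = "n - l + 1"
  let ?G = "\<lambda>s. (-1) ^ s * genocchi_poly l ((real s + x) / real m)"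
  let ?c = "\<lambda>j. stirling1 ?N j / real j powi (k - 1)"
  have "(\<Sum>j=1..?N. \<Sum>s=0..m-1. ?G s * (1 / real j powi (k - 1)) * (stirling1 ?N j / real ?N))
      = (\<Sum>j=1..?N. \<Sum>s<m. ?G s * (?c j / real ?N))"
    using \<open>m > 0\<close> by (intro sum.cong) auto
  also have "\<dots> = (\<Sum>s<m. ?G s) * ((\<Sum>j=1..?N. ?c j) / real ?N)"
    unfolding sum_divide_distrib sum_product by (rule sum.swap)
  finally show "real (n choose l) * genocchi_poly l x * ((\<Sum>j=1..?N. ?c j) / real ?N) =
      real (n choose l) * real m powi (int l - 1) *
      (\<Sum>j=1..?N. \<Sum>s=0..m-1. ?G s * (1 / real j powi (k - 1)) * (stirling1 ?N j / real ?N))"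
    by (simp add: genocchi_poly_multiplication[OF \<open>odd m\<close>, of l x])
qed

end
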